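(* Let $X$ be a Banach space and $x\in S_X$. (1) If $x$ is a preserved extreme point of $B_X$ and $x$ is a $\Delta$-point, then $x$ is a super $\Delta$-point. (2) If $x$ is an extreme point of $B_X$ and $x$ is a super $\Delta$-point, then $x$ is a ccs $\Delta$-point. (3) In particular, every preserved extreme point of $B_X$ which is a $\Delta$-point is both a super $\Delta$-point and a ccs $\Delta$-point.
   Context: $X$ is a real or complex Banach space with closed unit ball $B_X$, unit sphere $S_X$, and canonical embedding $J_X:X\to X^{**}$. A point $x\in B_X$ is a preserved extreme point if $J_X(x)$ is an extreme point of $B_{X^{**}}$. A slice of $B_X$ is a non-empty set $\{y\in B_X:\operatorname{Re}x^*(y)>\|x^*\|-\delta\}$ with $x^*\in X^*$, $\delta>0$; a ccs of $B_X$ is a set $\sum_{i=1}^n\lambda_iS_i$ with $\lambda_i\in(0,1]$, $\sum\lambda_i=1$, $S_i$ slices of $B_X$. For $x\in S_X$: $x$ is a $\Delta$-point if $\sup_{y\in S}\|x-y\|=2$ for every slice $S$ of $B_X$ containing $x$; a super $\Delta$-point if $\sup_{y\in V}\|x-y\|=2$ for every relatively weakly open subset $V$ of $B_X$ containing $x$; a ccs $\Delta$-point if $\sup_{y\in C}\|x-y\|=2$ for every ccs $C$ of $B_X$ containing $x$. *)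

theory Defs
  imports "HOL-Analysis.Analysis"
begin

(* X is a Banach space, viewed as a real Banach space.
   Its dual X* is the type 'a \<Rightarrow>\<^sub>L real, its bidual ('a \<Rightarrow>\<^sub>L real) \<Rightarrow>\<^sub>L real. *)

definition canon_embed :: "'a::banach \<Rightarrow> (('a \<Rightarrow>\<^sub>L real) \<Rightarrow>\<^sub>L real)" where
  "canon_embed x = Blinfun (\<lambda>f. blinfun_apply f x)"

definition preserved_extreme_point :: "'a::banach \<Rightarrow> bool" where
  "preserved_extreme_point x \<longleftrightarrow>
     x \<in> cball 0 1 \<and> canon_embed x extreme_point_of cball 0 1"

definition slice_of :: "('a::banach \<Rightarrow>\<^sub>L real) \<Rightarrow> real \<Rightarrow> 'a set" where
  "slice_of f \<delta> = {y \<in> cball 0 1. blinfun_apply f y > norm f - \<delta>}"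

definition is_slice :: "'a::banach set \<Rightarrow> bool" where
  "is_slice S \<longleftrightarrow> (\<exists>f \<delta>. \<delta> > 0 \<and> S = slice_of f \<delta>) \<and> S \<noteq> {}"

definition is_ccs :: "'a::banach set \<Rightarrow> bool" where
  "is_ccs C \<longleftrightarrow> (\<exists>n::nat. \<exists>lam :: nat \<Rightarrow> real. \<exists>S :: nat \<Rightarrow> 'a set.
      n \<ge> 1 \<and> (\<forall>i<n. 0 < lam i \<and> lam i \<le> 1 \<and> is_slice (S i)) \<and>
      (\<Sum>i<n. lam i) = 1 \<and>
      C = {(\<Sum>i<n. lam i *\<^sub>R y i) | y. \<forall>i<n. y i \<in> S i})"

definition weak_topology :: "'a::banach topology" where
  "weak_topology = topology_generated_by
     {{y. blinfun_apply f y \<in> U} | f U. open (U :: real set)}"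

definition rel_weakly_open_in_ball :: "'a::banach set \<Rightarrow> bool" where
  "rel_weakly_open_in_ball V \<longleftrightarrow> openin (subtopology weak_topology (cball 0 1)) V"

definition delta_point :: "'a::banach \<Rightarrow> bool" where
  "delta_point x \<longleftrightarrow> norm x = 1 \<and>
     (\<forall>S. is_slice S \<and> x \<in> S \<longrightarrow> (SUP y\<in>S. norm (x - y)) = 2)"

definition super_delta_point :: "'a::banach \<Rightarrow> bool" where
  "super_delta_point x \<longleftrightarrow> norm x = 1 \<and>
     (\<forall>V. rel_weakly_open_in_ball V \<and> x \<in> V \<longrightarrow> (SUP y\<in>V. norm (x - y)) = 2)"

definition ccs_delta_point :: "'a::banach \<Rightarrow> bool" where
  "ccs_delta_point x \<longleftrightarrow> norm x = 1 \<and>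
     (\<forall>C. is_ccs C \<and> x \<in> C \<longrightarrow> (SUP y\<in>C. norm (x - y)) = 2)"

end

theory Submission
  imports Defs
begin

(*
  Choquet's lemma in the bidual.  The bidual unit ball, modelled as the set of norm-one
  functionals on X* inside the product space X* \<Rightarrow> real, is compact and convex, and J x is an
  extreme point of it.  The part of the ball where a functional J y is \<epsilon>-far from J x in one
  of finitely many coordinates f \<in> F is a finite union of compact convex pieces missing J x.
  Joining them one at a time keeps the union compact, convex and (by extremality) away from
  J x, so J x is strictly separated from it by a functional of finitely many coordinates,
  that is, by some g \<in> X*.  The slice of B_X determined by g then contains x and lies in the
  weak neighbourhood given by F and \<epsilon>; hence the \<Delta>-condition on slices passes to all
  relatively weakly open sets.

  For the ccs statement: if x = \<Sum> \<lambda>_i y_i with y_i in slices S_i and x (or J x) is extreme, the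
  y_i agree with x on X*, so x lies in every S_i, and \<Inter> S_i is a relatively weakly open
  neighbourhood of x contained in the ccs.
*)

(* Real functions on a type carry no vector-space structure in the library,
   so convex combinations are written out pointwise. *)
definition comb :: "real \<Rightarrow> ('b \<Rightarrow> real) \<Rightarrow> ('b \<Rightarrow> real) \<Rightarrow> 'b \<Rightarrow> real" where
  "comb t a b = (\<lambda>f. (1 - t) * a f + t * b f)"

definition fun_convex :: "('b \<Rightarrow> real) set \<Rightarrow> bool" where
  "fun_convex C \<longleftrightarrow> (\<forall>a\<in>C. \<forall>b\<in>C. \<forall>t. 0 \<le> t \<and> t \<le> 1 \<longrightarrow> comb t a b \<in> C)"

(* The dual unit ball of 'b inside 'b \<Rightarrow> real with the product (weak-star) topology; for
   'b = X* this is B_{X**}, and its compactness below is the Banach-Alaoglu theorem. *)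
definition dual_ball :: "('b::real_normed_vector \<Rightarrow> real) set" where
  "dual_ball = {h. (\<forall>f g. h (f + g) = h f + h g) \<and> (\<forall>c f. h (c *\<^sub>R f) = c * h f)
                   \<and> (\<forall>f. \<bar>h f\<bar> \<le> norm f)}"

lemma comb_0 [simp]: "comb 0 a b = a" and comb_1 [simp]: "comb 1 a b = b"
  by (auto simp: comb_def)

lemma fun_convex_Int: "fun_convex A \<Longrightarrow> fun_convex B \<Longrightarrow> fun_convex (A \<inter> B)"
  unfolding fun_convex_def by blast

lemma closed_halfspace_coordinate: "closed {h::'b \<Rightarrow> real. r \<le> s * h f}"
  by (intro closed_Collect_le continuous_intros continuous_on_product_coordinates)

lemma fun_convex_halfspace_coordinate: "fun_convex {h::'b \<Rightarrow> real. r \<le> s * h f}"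
  unfolding fun_convex_def
proof (intro ballI allI impI)
  fix a b :: "'b \<Rightarrow> real" and t :: real
  assume "a \<in> {h. r \<le> s * h f}" "b \<in> {h. r \<le> s * h f}" "0 \<le> t \<and> t \<le> 1"
  then have "(1 - t) * r + t * r \<le> (1 - t) * (s * a f) + t * (s * b f)"
    by (intro add_mono mult_left_mono) auto
  then show "comb t a b \<in> {h. r \<le> s * h f}" by (simp add: comb_def algebra_simps)
qed

lemma compact_dual_ball: "compact (dual_ball :: ('b::real_normed_vector \<Rightarrow> real) set)"
proof -
  have eq: "dual_ball = PiE UNIV (\<lambda>f::'b. cball 0 (norm f)) \<inter>
      ({h. \<forall>f g. h (f + g) = h f + h g} \<inter> {h. \<forall>c f. h (c *\<^sub>R f) = c * h f})"
    by (auto simp: dual_ball_def PiE_def extensional_def)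
  have "compactin (product_topology (\<lambda>_. euclidean) UNIV)
      (PiE UNIV (\<lambda>f::'b. cball (0::real) (norm f)))"
    by (simp add: compactin_PiE)
  then have "compact (PiE UNIV (\<lambda>f::'b. cball (0::real) (norm f)))"
    by (simp add: euclidean_product_topology)
  moreover have "closed {h::'b \<Rightarrow> real. \<forall>f g. h (f + g) = h f + h g}"
    "closed {h::'b \<Rightarrow> real. \<forall>c f. h (c *\<^sub>R f) = c * h f}"
    by (intro closed_Collect_all closed_Collect_eq continuous_intros
          continuous_on_product_coordinates)+
  ultimately show ?thesis unfolding eq by (intro compact_Int_closed closed_Int)
qed

lemma fun_convex_dual_ball: "fun_convex (dual_ball :: ('b::real_normed_vector \<Rightarrow> real) set)"
  unfolding fun_convex_def
proof (intro ballI allI impI)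
  fix a b :: "'b \<Rightarrow> real" and t :: real
  assume a: "a \<in> dual_ball" and b: "b \<in> dual_ball" and t: "0 \<le> t \<and> t \<le> 1"
  have "\<bar>(1 - t) * a f + t * b f\<bar> \<le> norm f" for f
  proof -
    have "\<bar>(1 - t) * a f + t * b f\<bar> \<le> (1 - t) * \<bar>a f\<bar> + t * \<bar>b f\<bar>"
      using t by (simp add: abs_triangle_ineq[THEN order_trans] abs_mult)
    also have "\<dots> \<le> (1 - t) * norm f + t * norm f"
      using a b t unfolding dual_ball_def by (intro add_mono mult_left_mono) auto
    finally show ?thesis by (simp add: algebra_simps)
  qed
  then show "comb t a b \<in> dual_ball"
    using a b unfolding dual_ball_def comb_def by (simp add: algebra_simps)
qed

(* The union of all segments from A to B: the convex hull of A \<union> B when both are convex. *)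
definition fun_join :: "('b \<Rightarrow> real) set \<Rightarrow> ('b \<Rightarrow> real) set \<Rightarrow> ('b \<Rightarrow> real) set" where
  "fun_join A B = A \<union> B \<union> (\<lambda>(t, a, b). comb t a b) ` ({0..1} \<times> A \<times> B)"

lemma continuous_on_comb:
  "continuous_on UNIV (\<lambda>(t, a, b). comb t a b :: 'b \<Rightarrow> real)"
  unfolding comb_def case_prod_unfold
proof (intro continuous_on_coordinatewise_then_product)
  fix f :: 'b
  have "continuous_on UNIV (\<lambda>z::real \<times> ('b \<Rightarrow> real) \<times> ('b \<Rightarrow> real). fst (snd z) f)"
    by (rule continuous_on_compose2[OF continuous_on_product_coordinates,
          where f = "\<lambda>z. fst (snd z)"])
      (auto intro!: continuous_on_fst continuous_on_snd continuous_on_id)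
  moreover have "continuous_on UNIV (\<lambda>z::real \<times> ('b \<Rightarrow> real) \<times> ('b \<Rightarrow> real). snd (snd z) f)"
    by (rule continuous_on_compose2[OF continuous_on_product_coordinates,
          where f = "\<lambda>z. snd (snd z)"])
      (auto intro!: continuous_on_fst continuous_on_snd continuous_on_id)
  ultimately show "continuous_on UNIV (\<lambda>z::real \<times> ('b \<Rightarrow> real) \<times> ('b \<Rightarrow> real).
      (1 - fst z) * fst (snd z) f + fst z * snd (snd z) f)"
    by (intro continuous_intros)
qed

lemma compact_fun_join:
  fixes A B :: "('b \<Rightarrow> real) set"
  assumes "compact A" "compact B"
  shows "compact (fun_join A B)"
  unfolding fun_join_def using assms
  by (intro compact_Un compact_continuous_image compact_Times compact_Icc
      continuous_on_subset[OF continuous_on_comb]) auto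

lemma fun_join_subset:
  assumes "fun_convex K" "A \<subseteq> K" "B \<subseteq> K"
  shows "fun_join A B \<subseteq> K"
  using assms unfolding fun_join_def fun_convex_def by (auto simp: subset_iff)

lemma fun_join_eq:
  assumes "A \<noteq> {}" "B \<noteq> {}"
  shows "fun_join A B = (\<lambda>(t, a, b). comb t a b) ` ({0..1} \<times> A \<times> B)"
proof -
  obtain a0 b0 where "a0 \<in> A" "b0 \<in> B" using assms by blast
  then have "A \<subseteq> (\<lambda>(t, a, b). comb t a b) ` ({0..1} \<times> A \<times> B)"
    and "B \<subseteq> (\<lambda>(t, a, b). comb t a b) ` ({0..1} \<times> A \<times> B)"
    by (auto intro: rev_image_eqI[of "(0, _, b0)"] rev_image_eqI[of "(1, a0, _)"])
  then show ?thesis unfolding fun_join_def by blast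
qed

(* Division by zero yields zero, so no case split is needed where these weights are used. *)
lemma sum_mult_ratio:
  fixes p q :: real
  assumes "0 \<le> p" "0 \<le> q"
  shows "(p + q) * (1 - q / (p + q)) = p" "(p + q) * (q / (p + q)) = q"
  using assms by (cases "p + q = 0"; simp add: field_simps)+

lemma comb_comb:
  assumes "0 \<le> s" "s \<le> 1" "0 \<le> t" "t \<le> 1" "0 \<le> t'" "t' \<le> 1"
  defines "\<alpha> \<equiv> (1 - s) * (1 - t)" and "\<beta> \<equiv> s * (1 - t')" and "\<gamma> \<equiv> (1 - s) * t" and "\<delta> \<equiv> s * t'"
  shows "comb s (comb t a b) (comb t' a' b') =
    comb (\<gamma> + \<delta>) (comb (\<beta> / (\<alpha> + \<beta>)) a a') (comb (\<delta> / (\<gamma> + \<delta>)) b b')"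
proof (rule ext)
  fix f
  define u v where "u = \<beta> / (\<alpha> + \<beta>)" and "v = \<delta> / (\<gamma> + \<delta>)"
  have "0 \<le> \<alpha>" "0 \<le> \<beta>" "0 \<le> \<gamma>" "0 \<le> \<delta>" using assms(1-6) unfolding \<alpha>_def \<beta>_def \<gamma>_def \<delta>_def by auto
  moreover have "1 - (\<gamma> + \<delta>) = \<alpha> + \<beta>" unfolding \<alpha>_def \<beta>_def \<gamma>_def \<delta>_def by (simp add: algebra_simps)
  ultimately have weights: "(1 - (\<gamma> + \<delta>)) * (1 - u) = \<alpha>" "(1 - (\<gamma> + \<delta>)) * u = \<beta>"
    "(\<gamma> + \<delta>) * (1 - v) = \<gamma>" "(\<gamma> + \<delta>) * v = \<delta>"
    unfolding u_def v_def by (simp_all add: sum_mult_ratio)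
  have "comb (\<gamma> + \<delta>) (comb u a a') (comb v b b') f =
      (1 - (\<gamma> + \<delta>)) * (1 - u) * a f + (1 - (\<gamma> + \<delta>)) * u * a' f
      + (\<gamma> + \<delta>) * (1 - v) * b f + (\<gamma> + \<delta>) * v * b' f"
    unfolding comb_def by (simp add: algebra_simps)
  also have "\<dots> = \<alpha> * a f + \<beta> * a' f + \<gamma> * b f + \<delta> * b' f"
    by (simp only: weights)
  also have "\<dots> = comb s (comb t a b) (comb t' a' b') f"
    unfolding comb_def \<alpha>_def \<beta>_def \<gamma>_def \<delta>_def by (simp add: algebra_simps)
  finally show "comb s (comb t a b) (comb t' a' b') f = comb (\<gamma> + \<delta>) (comb u a a') (comb v b b') f"
    by simp
qed

lemma fun_convex_fun_join:
  assumes A: "fun_convex A" and B: "fun_convex B"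
  shows "fun_convex (fun_join A B)"
proof (cases "A = {} \<or> B = {}")
  case True
  then show ?thesis using assms by (auto simp: fun_join_def)
next
  case False
  have join: "comb s (comb t a b) (comb t' a' b') \<in> (\<lambda>(t, a, b). comb t a b) ` ({0..1} \<times> A \<times> B)"
    if "a \<in> A" "b \<in> B" "a' \<in> A" "b' \<in> B" "t \<in> {0..1}" "t' \<in> {0..1}" "0 \<le> s" "s \<le> 1"
    for s t t' a b a' b'
  proof -
    have weight: "0 \<le> w / (v + w)" "w / (v + w) \<le> 1" if "0 \<le> v" "0 \<le> w" for v w :: real
      using that by (auto simp: divide_le_eq_1)
    have "(1 - s) * t + s * t' \<in> {0..1}"
      using that convex_bound_le[of t 1 t' "1 - s" s] by auto
    moreover have "comb (s * (1 - t') / ((1 - s) * (1 - t) + s * (1 - t'))) a a' \<in> A"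
      using that weight[of "(1 - s) * (1 - t)" "s * (1 - t')"]
      by (intro A[unfolded fun_convex_def, rule_format]) auto
    moreover have "comb (s * t' / ((1 - s) * t + s * t')) b b' \<in> B"
      using that weight[of "(1 - s) * t" "s * t'"]
      by (intro B[unfolded fun_convex_def, rule_format]) auto
    ultimately show ?thesis
      using comb_comb[of s t t' a b a' b'] that
      by (intro rev_image_eqI[of "((1 - s) * t + s * t',
          comb (s * (1 - t') / ((1 - s) * (1 - t) + s * (1 - t'))) a a',
          comb (s * t' / ((1 - s) * t + s * t')) b b')"]) auto
  qed
  have "fun_join A B = (\<lambda>(t, a, b). comb t a b) ` ({0..1} \<times> A \<times> B)"
    using False by (intro fun_join_eq) auto
  then show ?thesis unfolding fun_convex_def using join by fastforce
qed

definition fun_extreme_point_of :: "('b \<Rightarrow> real) \<Rightarrow> ('b \<Rightarrow> real) set \<Rightarrow> bool" where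
  "fun_extreme_point_of p K \<longleftrightarrow>
     p \<in> K \<and> (\<forall>a\<in>K. \<forall>b\<in>K. \<forall>t. 0 < t \<and> t < 1 \<and> comb t a b = p \<longrightarrow> a = p)"

lemma fun_extreme_point_notin_join:
  assumes p: "fun_extreme_point_of p K" and "A \<subseteq> K" "B \<subseteq> K" "p \<notin> A" "p \<notin> B"
  shows "p \<notin> fun_join A B"
proof
  assume "p \<in> fun_join A B"
  then obtain t a b where ab: "p = comb t a b" "t \<in> {0..1}" "a \<in> A" "b \<in> B"
    using assms(4,5) unfolding fun_join_def by auto
  consider "t = 0" | "t = 1" | "0 < t" "t < 1" using ab(2) by fastforce
  then show False
  proof cases
    case 3
    then have "a = p" using p ab assms(2,3) unfolding fun_extreme_point_of_def by blast
    then show False using ab(3) assms(4) by simp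
  qed (use ab assms(4,5) in auto)
qed

lemma compact_convex_superset_avoiding:
  assumes "finite P" and K: "fun_convex K" "fun_extreme_point_of p K"
    and P: "\<And>A. A \<in> P \<Longrightarrow> compact A \<and> fun_convex A \<and> A \<subseteq> K \<and> p \<notin> A"
  shows "\<exists>C. compact C \<and> fun_convex C \<and> C \<subseteq> K \<and> p \<notin> C \<and> \<Union>P \<subseteq> C"
  using assms(1) P
proof (induction P rule: finite_induct)
  case empty
  have "fun_convex {}" by (simp add: fun_convex_def)
  then show ?case by (intro exI[of _ "{}"]) simp
next
  case (insert A P)
  have "\<exists>C. compact C \<and> fun_convex C \<and> C \<subseteq> K \<and> p \<notin> C \<and> \<Union>P \<subseteq> C"
    using insert.prems by (intro insert.IH) simp
  then obtain C where C: "compact C" "fun_convex C" "C \<subseteq> K" "p \<notin> C" "\<Union>P \<subseteq> C"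
    by (elim exE conjE) (rule that)
  have A: "compact A" "fun_convex A" "A \<subseteq> K" "p \<notin> A" using insert.prems by simp_all
  show ?case
  proof (intro exI[of _ "fun_join C A"] conjI)
    show "compact (fun_join C A)" using C A by (intro compact_fun_join)
    show "fun_convex (fun_join C A)" using C A by (intro fun_convex_fun_join)
    show "fun_join C A \<subseteq> K" using C A K by (intro fun_join_subset)
    show "p \<notin> fun_join C A" using C A K by (intro fun_extreme_point_notin_join)
    show "\<Union>(insert A P) \<subseteq> fun_join C A" using C unfolding fun_join_def by auto
  qed
qed

lemma finite_coordinates_separate:
  fixes C :: "('b \<Rightarrow> real) set"
  assumes "compact C" "p \<notin> C"
  obtains G where "finite G" "\<And>h. h \<in> C \<Longrightarrow> \<exists>f\<in>G. h f \<noteq> p f"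
proof -
  have "open {h::'b \<Rightarrow> real. h f \<noteq> p f}" if "f \<in> UNIV" for f
    by (intro open_Collect_neq continuous_on_product_coordinates continuous_on_const)
  moreover have "C \<subseteq> (\<Union>f. {h. h f \<noteq> p f})"
  proof
    fix h assume "h \<in> C"
    then have "h \<noteq> p" using assms(2) by auto
    then obtain f where "h f \<noteq> p f" by auto
    then show "h \<in> (\<Union>f. {h. h f \<noteq> p f})" by auto
  qed
  ultimately obtain G where "G \<subseteq> UNIV" "finite G" "C \<subseteq> (\<Union>f\<in>G. {h. h f \<noteq> p f})"
    by (rule compactE_image[OF assms(1)])
  then show ?thesis using that by blast
qed

lemma least_squares_variational_inequality:
  fixes C :: "('b \<Rightarrow> real) set"
  assumes C: "fun_convex C" and "h0 \<in> C" "h \<in> C"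
    and min: "\<And>h. h \<in> C \<Longrightarrow> (\<Sum>f\<in>G. (h0 f - p f)\<^sup>2) \<le> (\<Sum>f\<in>G. (h f - p f)\<^sup>2)"
  shows "(\<Sum>f\<in>G. (p f - h0 f) * (h f - h0 f)) \<le> 0"
proof (rule ccontr)
  define D where "D = (\<Sum>f\<in>G. (p f - h0 f) * (h f - h0 f))"
  define M where "M = (\<Sum>f\<in>G. (h f - h0 f)\<^sup>2)"
  assume "\<not> (\<Sum>f\<in>G. (p f - h0 f) * (h f - h0 f)) \<le> 0"
  then have "D > 0" unfolding D_def by simp
  have "M \<ge> 0" unfolding M_def by (intro sum_nonneg) auto
  define t where "t = min 1 (D / (M + 1))"
  have t: "0 < t" "t \<le> 1" using \<open>D > 0\<close> \<open>M \<ge> 0\<close> unfolding t_def by auto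
  have "(\<Sum>f\<in>G. (h0 f - p f)\<^sup>2) \<le> (\<Sum>f\<in>G. (comb t h0 h f - p f)\<^sup>2)"
    using C assms(2,3) t unfolding fun_convex_def by (intro min) auto
  also have "(\<Sum>f\<in>G. (comb t h0 h f - p f)\<^sup>2)
      = (\<Sum>f\<in>G. (h0 f - p f)\<^sup>2 - 2 * t * ((p f - h0 f) * (h f - h0 f)) + t\<^sup>2 * (h f - h0 f)\<^sup>2)"
    unfolding comb_def by (intro sum.cong) (auto simp: power2_eq_square algebra_simps)
  also have "\<dots> = (\<Sum>f\<in>G. (h0 f - p f)\<^sup>2) - 2 * t * D + t\<^sup>2 * M"
    unfolding D_def M_def by (simp add: sum.distrib sum_subtractf sum_distrib_left)
  finally have "2 * t * D \<le> t\<^sup>2 * M" by simp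
  then have "2 * D \<le> t * M" using t by (simp add: power2_eq_square mult.assoc)
  moreover have "t * M \<le> D"
  proof -
    have "t * M \<le> (D / (M + 1)) * M" using \<open>M \<ge> 0\<close> unfolding t_def by (intro mult_right_mono) auto
    also have "\<dots> \<le> D" using \<open>M \<ge> 0\<close> \<open>D > 0\<close> by (simp add: field_simps)
    finally show ?thesis .
  qed
  ultimately show False using \<open>D > 0\<close> by simp
qed

lemma compact_convex_separation_finite:
  fixes C :: "('b \<Rightarrow> real) set"
  assumes G: "finite G" and C: "compact C" "fun_convex C" "C \<noteq> {}"
    and separate: "\<And>h. h \<in> C \<Longrightarrow> \<exists>f\<in>G. h f \<noteq> p f"
  obtains c \<eta> where "\<eta> > 0" "\<And>h. h \<in> C \<Longrightarrow> (\<Sum>f\<in>G. c f * h f) + \<eta> \<le> (\<Sum>f\<in>G. c f * p f)"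
proof -
  define Q where "Q h = (\<Sum>f\<in>G. (h f - p f)\<^sup>2)" for h :: "'b \<Rightarrow> real"
  have "continuous_on C Q" unfolding Q_def
    by (intro continuous_intros continuous_on_subset[OF continuous_on_product_coordinates]) auto
  then obtain h0 where h0: "h0 \<in> C" "\<And>h. h \<in> C \<Longrightarrow> Q h0 \<le> Q h"
    using continuous_attains_inf[OF C(1,3)] by blast
  obtain f0 where f0: "f0 \<in> G" "h0 f0 \<noteq> p f0" using separate h0(1) by blast
  have "0 < (h0 f0 - p f0)\<^sup>2" using f0 by simp
  also have "\<dots> \<le> Q h0" unfolding Q_def by (rule member_le_sum[OF f0(1) _ G]) auto
  finally have "Q h0 > 0" .
  moreover have "(\<Sum>f\<in>G. (p f - h0 f) * h f) + Q h0 \<le> (\<Sum>f\<in>G. (p f - h0 f) * p f)"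
    if "h \<in> C" for h
  proof -
    have "(\<Sum>f\<in>G. (p f - h0 f) * p f) - (\<Sum>f\<in>G. (p f - h0 f) * h f)
        = Q h0 - (\<Sum>f\<in>G. (p f - h0 f) * (h f - h0 f))"
      unfolding Q_def sum_subtractf[symmetric]
      by (intro sum.cong) (auto simp: power2_eq_square algebra_simps)
    then show ?thesis
      using least_squares_variational_inequality[OF C(2) h0(1) that h0(2)[unfolded Q_def]] by simp
  qed
  ultimately show ?thesis by (rule that[of "Q h0" "\<lambda>f. p f - h0 f"])
qed

lemma compact_convex_separation:
  fixes C :: "('b \<Rightarrow> real) set"
  assumes "compact C" "fun_convex C" "p \<notin> C"
  obtains G c \<eta> where "finite G" "\<eta> > 0"
    "\<And>h. h \<in> C \<Longrightarrow> (\<Sum>f\<in>G. c f * h f) + \<eta> \<le> (\<Sum>f\<in>G. c f * p f)"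
proof (cases "C = {}")
  case True
  then show ?thesis using that[where G = "{}" and \<eta> = 1] by simp
next
  case False
  obtain G where "finite G" "\<And>h. h \<in> C \<Longrightarrow> \<exists>f\<in>G. h f \<noteq> p f"
    using finite_coordinates_separate[OF assms(1,3)] by blast
  then obtain c \<eta> where "\<eta> > 0" "\<And>h. h \<in> C \<Longrightarrow> (\<Sum>f\<in>G. c f * h f) + \<eta> \<le> (\<Sum>f\<in>G. c f * p f)"
    using compact_convex_separation_finite[OF _ assms(1,2) False] by blast
  with \<open>finite G\<close> show ?thesis by (rule that)
qed

lemma canon_embed_apply [simp]: "blinfun_apply (canon_embed x) f = blinfun_apply f x"
  unfolding canon_embed_def
  by (subst bounded_linear_Blinfun_apply) (auto intro: blinfun.bounded_linear_left)

lemma norm_canon_embed_le: "norm (canon_embed x) \<le> norm x"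
proof (rule norm_blinfun_bound)
  fix f :: "'a \<Rightarrow>\<^sub>L real"
  show "norm (blinfun_apply (canon_embed x) f) \<le> norm x * norm f"
    using norm_blinfun[of f x] by (simp add: mult.commute)
qed simp

lemma canon_embed_sum:
  "canon_embed (\<Sum>i\<in>I. lam i *\<^sub>R y i) = (\<Sum>i\<in>I. lam i *\<^sub>R canon_embed (y i :: 'a::banach))"
  by (rule blinfun_eqI)
    (simp add: blinfun.sum_left blinfun.scaleR_left blinfun.sum_right blinfun.scaleR_right)

lemma evaluation_in_dual_ball:
  assumes "norm (y::'a::banach) \<le> 1"
  shows "(\<lambda>f. blinfun_apply f y) \<in> dual_ball"
proof -
  have "\<bar>blinfun_apply f y\<bar> \<le> norm f" for f :: "'a \<Rightarrow>\<^sub>L real"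
    using norm_blinfun[of f y] mult_left_mono[OF assms, of "norm f"] by simp
  then show ?thesis unfolding dual_ball_def by (simp add: blinfun.add_left blinfun.scaleR_left)
qed

lemma dual_ball_Blinfun:
  assumes "a \<in> dual_ball"
  shows "blinfun_apply (Blinfun a) = a" "norm (Blinfun a) \<le> 1"
proof -
  have "bounded_linear a"
    using assms unfolding dual_ball_def by (intro bounded_linear_intro[where K=1]) auto
  then show a: "blinfun_apply (Blinfun a) = a" by (rule bounded_linear_Blinfun_apply)
  show "norm (Blinfun a) \<le> 1"
    using assms unfolding dual_ball_def by (intro norm_blinfun_bound) (auto simp: a)
qed

lemma fun_extreme_point_if_preserved_extreme_point:
  assumes "preserved_extreme_point (x::'a::banach)"
  shows "fun_extreme_point_of (\<lambda>f. blinfun_apply f x) dual_ball"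
  unfolding fun_extreme_point_of_def
proof (intro conjI ballI allI impI)
  show "(\<lambda>f. blinfun_apply f x) \<in> dual_ball"
    using assms by (intro evaluation_in_dual_ball) (simp add: preserved_extreme_point_def)
  fix a b t
  assume a: "a \<in> dual_ball" and b: "b \<in> dual_ball"
    and t: "0 < t \<and> t < 1 \<and> comb t a b = (\<lambda>f. blinfun_apply f x)"
  have "canon_embed x = (1 - t) *\<^sub>R Blinfun a + t *\<^sub>R Blinfun b"
  proof (rule blinfun_eqI)
    fix f
    show "blinfun_apply (canon_embed x) f
        = blinfun_apply ((1 - t) *\<^sub>R Blinfun a + t *\<^sub>R Blinfun b) f"
      using fun_cong[OF conjunct2[OF conjunct2[OF t]], of f]
      by (simp add: comb_def plus_blinfun.rep_eq scaleR_blinfun.rep_eq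
          dual_ball_Blinfun[OF a] dual_ball_Blinfun[OF b])
  qed
  moreover have "Blinfun a \<in> cball 0 1" "Blinfun b \<in> cball 0 1"
    using dual_ball_Blinfun(2) a b by auto
  then have "canon_embed x \<notin> open_segment (Blinfun a) (Blinfun b)"
    using assms unfolding preserved_extreme_point_def extreme_point_of_def by blast
  ultimately have "Blinfun a = Blinfun b" using t by (auto simp: in_segment)
  then have "a = b" using dual_ball_Blinfun(1) a b by metis
  then show "a = (\<lambda>f. blinfun_apply f x)"
    using t by (auto simp: comb_def algebra_simps)
qed

definition weak_nbhd :: "('a::banach \<Rightarrow>\<^sub>L real) set \<Rightarrow> real \<Rightarrow> 'a \<Rightarrow> 'a set" where
  "weak_nbhd F \<epsilon> x = {y. \<forall>f\<in>F. \<bar>blinfun_apply f y - blinfun_apply f x\<bar> < \<epsilon>}"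

lemma weak_nbhd_anti_mono: "F \<subseteq> F' \<Longrightarrow> \<epsilon>' \<le> \<epsilon> \<Longrightarrow> weak_nbhd F' \<epsilon>' x \<subseteq> weak_nbhd F \<epsilon> x"
  unfolding weak_nbhd_def by fastforce

lemma weak_topology_nbhd_base:
  assumes "openin weak_topology W" "(x::'a::banach) \<in> W"
  obtains F \<epsilon> where "finite F" "\<epsilon> > 0" "weak_nbhd F \<epsilon> x \<subseteq> W"
proof -
  have "generate_topology_on {{y. blinfun_apply f y \<in> U} | f U. open (U::real set)} W"
    using assms(1) unfolding weak_topology_def openin_topology_generated_by_iff .
  then have "\<forall>x\<in>W. \<exists>F \<epsilon>. finite F \<and> \<epsilon> > 0 \<and> weak_nbhd F \<epsilon> x \<subseteq> W"
  proof induction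
    case (Int a b)
    show ?case
    proof
      fix x assume "x \<in> a \<inter> b"
      then obtain F1 F2 and e1 e2 :: real where "finite F1" "e1 > 0" "weak_nbhd F1 e1 x \<subseteq> a"
        "finite F2" "e2 > 0" "weak_nbhd F2 e2 x \<subseteq> b"
        using Int.IH by (meson IntD1 IntD2)
      moreover have "weak_nbhd (F1 \<union> F2) (min e1 e2) x \<subseteq> weak_nbhd F1 e1 x"
        "weak_nbhd (F1 \<union> F2) (min e1 e2) x \<subseteq> weak_nbhd F2 e2 x"
        by (intro weak_nbhd_anti_mono; simp)+
      ultimately show "\<exists>F \<epsilon>. finite F \<and> \<epsilon> > 0 \<and> weak_nbhd F \<epsilon> x \<subseteq> a \<inter> b"
        by (intro exI[of _ "F1 \<union> F2"] exI[of _ "min e1 e2"]) auto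
    qed
  next
    case (UN K)
    then show ?case by (meson UnionE Union_upper order_trans)
  next
    case (Basis s)
    then obtain f and U :: "real set" where s: "s = {y. blinfun_apply f y \<in> U}" "open U"
      by blast
    show ?case
    proof
      fix x assume "x \<in> s"
      then obtain e where "e > 0" "ball (blinfun_apply f x) e \<subseteq> U"
        using s open_contains_ball by blast
      then have "weak_nbhd {f} e x \<subseteq> s"
        unfolding weak_nbhd_def s by (auto simp: dist_real_def abs_minus_commute)
      with \<open>e > 0\<close> show "\<exists>F \<epsilon>. finite F \<and> \<epsilon> > 0 \<and> weak_nbhd F \<epsilon> x \<subseteq> s"
        by (intro exI[of _ "{f}"] exI[of _ e]) simp
    qed
  qed simp
  with assms(2) that show ?thesis by blast
qed

lemma slice_subset_cball: "slice_of f \<delta> \<subseteq> cball 0 1"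
  by (auto simp: slice_of_def)

lemma rel_weakly_open_slice: "rel_weakly_open_in_ball (slice_of (f::'a::banach \<Rightarrow>\<^sub>L real) \<delta>)"
proof -
  have "openin weak_topology {y::'a. blinfun_apply f y \<in> {norm f - \<delta><..}}"
    unfolding weak_topology_def openin_topology_generated_by_iff
    by (rule generate_topology_on.Basis) (use open_greaterThan in blast)
  moreover have "slice_of f \<delta> = {y. blinfun_apply f y \<in> {norm f - \<delta><..}} \<inter> cball 0 1"
    by (auto simp: slice_of_def)
  ultimately show ?thesis unfolding rel_weakly_open_in_ball_def openin_subtopology by blast
qed

lemma separating_functional_outside_weak_nbhd:
  fixes x :: "'a::banach"
  assumes "preserved_extreme_point x" "finite F" "\<epsilon> > 0"
  obtains g and \<eta> :: real where "\<eta> > 0"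
    "\<And>y. norm y \<le> 1 \<Longrightarrow> y \<notin> weak_nbhd F \<epsilon> x \<Longrightarrow> blinfun_apply g y + \<eta> \<le> blinfun_apply g x"
proof -
  define p where "p = (\<lambda>f::'a \<Rightarrow>\<^sub>L real. blinfun_apply f x)"
  define piece where "piece = (\<lambda>(f, s). dual_ball \<inter> {h. \<epsilon> + s * p f \<le> s * h f})"
  have p: "fun_extreme_point_of p dual_ball"
    unfolding p_def using assms(1) by (rule fun_extreme_point_if_preserved_extreme_point)
  have "compact A \<and> fun_convex A \<and> A \<subseteq> dual_ball \<and> p \<notin> A" if "A \<in> piece ` (F \<times> {1, -1})" for A
    using that assms(3) unfolding piece_def
    by (auto intro!: compact_Int_closed compact_dual_ball closed_halfspace_coordinate
        fun_convex_Int fun_convex_dual_ball fun_convex_halfspace_coordinate)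
  then obtain C where C: "compact C" "fun_convex C" "p \<notin> C" "\<Union>(piece ` (F \<times> {1, -1})) \<subseteq> C"
    using compact_convex_superset_avoiding[OF _ fun_convex_dual_ball p] assms(2)
    by (metis finite_SigmaI finite_imageI finite.emptyI finite_insert)
  obtain G c \<eta> where "finite G" "\<eta> > 0"
    and sep: "\<And>h. h \<in> C \<Longrightarrow> (\<Sum>f\<in>G. c f * h f) + \<eta> \<le> (\<Sum>f\<in>G. c f * p f)"
    using compact_convex_separation[OF C(1-3)] by metis
  show ?thesis
  proof (rule that[of \<eta> "\<Sum>f\<in>G. c f *\<^sub>R f"])
    fix y :: 'a
    assume "norm y \<le> 1" "y \<notin> weak_nbhd F \<epsilon> x"
    then obtain f where "f \<in> F" and far: "\<epsilon> \<le> \<bar>blinfun_apply f y - p f\<bar>"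
      unfolding weak_nbhd_def p_def by (auto simp: not_less)
    define s :: real where "s = (if p f \<le> blinfun_apply f y then 1 else -1)"
    have "(\<lambda>f. blinfun_apply f y) \<in> piece (f, s)"
      using far \<open>norm y \<le> 1\<close> unfolding piece_def s_def
      by (auto intro: evaluation_in_dual_ball)
    moreover have "(f, s) \<in> F \<times> {1, -1}" using \<open>f \<in> F\<close> by (simp add: s_def)
    ultimately have "(\<lambda>f. blinfun_apply f y) \<in> C" using C(4) by blast
    then show "blinfun_apply (\<Sum>f\<in>G. c f *\<^sub>R f) y + \<eta> \<le> blinfun_apply (\<Sum>f\<in>G. c f *\<^sub>R f) x"
      using sep unfolding p_def by (simp add: blinfun.sum_left blinfun.scaleR_left)
  qed fact
qed

lemma slice_within_weak_nbhd:
  fixes x :: "'a::banach"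
  assumes "preserved_extreme_point x" "norm x = 1" "finite F" "\<epsilon> > 0"
  obtains g \<delta> where "\<delta> > 0" "x \<in> slice_of g \<delta>" "slice_of g \<delta> \<subseteq> weak_nbhd F \<epsilon> x"
proof -
  obtain g :: "'a \<Rightarrow>\<^sub>L real" and \<eta> where "\<eta> > 0" and far:
    "\<And>y. norm y \<le> 1 \<Longrightarrow> y \<notin> weak_nbhd F \<epsilon> x \<Longrightarrow> blinfun_apply g y + \<eta> \<le> blinfun_apply g x"
    using separating_functional_outside_weak_nbhd[OF assms(1,3,4)] by metis
  have "blinfun_apply g x \<le> norm g" using norm_blinfun[of g x] assms(2) by simp
  define \<delta> where "\<delta> = norm g - blinfun_apply g x + \<eta> / 2"
  show ?thesis
  proof (rule that[where g = g and \<delta> = \<delta>])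
    show "\<delta> > 0" "x \<in> slice_of g \<delta>"
      using \<open>blinfun_apply g x \<le> norm g\<close> \<open>\<eta> > 0\<close> assms(2)
      unfolding slice_of_def \<delta>_def by auto
    show "slice_of g \<delta> \<subseteq> weak_nbhd F \<epsilon> x"
    proof
      fix y assume "y \<in> slice_of g \<delta>"
      then have "norm y \<le> 1" "blinfun_apply g x < blinfun_apply g y + \<eta>"
        using \<open>\<eta> > 0\<close> unfolding slice_of_def \<delta>_def by auto
      then show "y \<in> weak_nbhd F \<epsilon> x" using far[of y] by linarith
    qed
  qed
qed

lemma SUP_dist_eq_2_superset:
  fixes x :: "'a::real_normed_vector"
  assumes "S \<subseteq> V" "V \<subseteq> cball 0 1" "x \<in> S" "norm x = 1" "(SUP y\<in>S. norm (x - y)) = 2"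
  shows "(SUP y\<in>V. norm (x - y)) = 2"
proof -
  have bound: "norm (x - y) \<le> 2" if "y \<in> V" for y
    using norm_triangle_ineq4[of x y] assms(2,4) that by auto
  have "(SUP y\<in>V. norm (x - y)) \<le> 2"
    using bound assms(1,3) by (intro cSUP_least) auto
  moreover have "(SUP y\<in>S. norm (x - y)) \<le> (SUP y\<in>V. norm (x - y))"
    using bound assms(1,3) by (intro cSUP_subset_mono bdd_aboveI2[where M=2]) auto
  ultimately show ?thesis using assms(5) by linarith
qed

lemma super_delta_point_if_preserved_extreme_delta_point:
  fixes x :: "'a::banach"
  assumes pe: "preserved_extreme_point x" and \<Delta>: "delta_point x"
  shows "super_delta_point x"
  unfolding super_delta_point_def
proof (intro conjI allI impI; (elim conjE)?)
  show "norm x = 1" using \<Delta> by (simp add: delta_point_def)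
  fix V assume "rel_weakly_open_in_ball V" "x \<in> V"
  then obtain W where "openin weak_topology W" "V = W \<inter> cball 0 1"
    unfolding rel_weakly_open_in_ball_def openin_subtopology by blast
  then obtain F \<epsilon> where "finite F" "\<epsilon> > 0" "weak_nbhd F \<epsilon> x \<subseteq> W"
    using weak_topology_nbhd_base \<open>x \<in> V\<close> by blast
  then obtain g \<delta> where "\<delta> > 0" "x \<in> slice_of g \<delta>" "slice_of g \<delta> \<subseteq> weak_nbhd F \<epsilon> x"
    using slice_within_weak_nbhd[OF pe \<open>norm x = 1\<close>] by metis
  moreover have "is_slice (slice_of g \<delta>)" unfolding is_slice_def using calculation by blast
  ultimately have "(SUP y\<in>slice_of g \<delta>. norm (x - y)) = 2"
    using \<Delta> unfolding delta_point_def by blast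
  moreover have "slice_of g \<delta> \<subseteq> V"
    using \<open>V = W \<inter> cball 0 1\<close> slice_subset_cball \<open>slice_of g \<delta> \<subseteq> weak_nbhd F \<epsilon> x\<close>
      \<open>weak_nbhd F \<epsilon> x \<subseteq> W\<close> by blast
  ultimately show "(SUP y\<in>V. norm (x - y)) = 2"
    using SUP_dist_eq_2_superset \<open>V = W \<inter> cball 0 1\<close> \<open>x \<in> slice_of g \<delta>\<close> \<open>norm x = 1\<close>
    by (metis inf_le2)
qed

lemma extreme_point_convex_sum:
  fixes x :: "'b::real_vector" and n :: nat
  assumes K: "convex K" "x extreme_point_of K"
    and y: "\<And>i. i < n \<Longrightarrow> 0 < lam i \<and> y i \<in> K"
    and lam: "(\<Sum>i<n. lam i) = 1" and x: "x = (\<Sum>i<n. lam i *\<^sub>R y i)"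
    and "i < n"
  shows "y i = x"
proof (rule ccontr)
  assume "y i \<noteq> x"
  define I where "I = {i\<in>{..<n}. y i \<noteq> x}"
  define L where "L = (\<Sum>i\<in>I. lam i)"
  have I: "I \<subseteq> {..<n}" "i \<in> I" using \<open>i < n\<close> \<open>y i \<noteq> x\<close> unfolding I_def by auto
  have "finite I" by (rule finite_subset[OF I(1)]) simp
  have "L > 0" unfolding L_def using I \<open>finite I\<close> y by (intro sum_pos) auto
  have "x = (\<Sum>i\<in>{..<n} - I. lam i *\<^sub>R y i) + (\<Sum>i\<in>I. lam i *\<^sub>R y i)"
    using x sum.subset_diff[OF I(1)] by simp
  also have "(\<Sum>i\<in>{..<n} - I. lam i *\<^sub>R y i) = (\<Sum>i\<in>{..<n} - I. lam i *\<^sub>R x)"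
    by (intro sum.cong) (auto simp: I_def)
  also have "\<dots> = (\<Sum>i\<in>{..<n} - I. lam i) *\<^sub>R x" by (simp add: scaleR_sum_left)
  also have "(\<Sum>i\<in>{..<n} - I. lam i) = 1 - L"
    using sum.subset_diff[OF I(1), of lam] lam unfolding L_def by simp
  finally have "L *\<^sub>R x = (\<Sum>i\<in>I. lam i *\<^sub>R y i)" by (simp add: algebra_simps)
  then have "inverse L *\<^sub>R (L *\<^sub>R x) = (\<Sum>i\<in>I. (lam i / L) *\<^sub>R y i)"
    by (simp add: scaleR_sum_right divide_inverse_commute)
  then have "x = (\<Sum>i\<in>I. (lam i / L) *\<^sub>R y i)" using \<open>L > 0\<close> by simp
  moreover have "(\<Sum>i\<in>I. (lam i / L) *\<^sub>R y i) \<in> K - {x}"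
  proof (rule convex_sum[OF \<open>finite I\<close>])
    show "convex (K - {x})" using K extreme_point_of_stillconvex by blast
    show "(\<Sum>i\<in>I. lam i / L) = 1"
      using \<open>L > 0\<close> unfolding L_def by (simp add: sum_divide_distrib[symmetric])
    fix j assume "j \<in> I"
    then have "j < n" "y j \<noteq> x" unfolding I_def by auto
    then show "0 \<le> lam j / L" "y j \<in> K - {x}" using y[of j] \<open>L > 0\<close> by auto
  qed
  ultimately show False by simp
qed

definition weakly_rigid :: "'a::banach \<Rightarrow> bool" where
  "weakly_rigid x \<longleftrightarrow> (\<forall>(n::nat) lam y i (f::'a \<Rightarrow>\<^sub>L real).
      (\<forall>j<n. 0 < lam j \<and> norm (y j) \<le> 1) \<and> (\<Sum>j<n. lam j) = 1 \<and> x = (\<Sum>j<n. lam j *\<^sub>R y j)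
      \<and> i < n \<longrightarrow> blinfun_apply f (y i) = blinfun_apply f x)"

lemma weakly_rigidD:
  fixes x :: "'a::banach" and n :: nat and f :: "'a \<Rightarrow>\<^sub>L real"
  assumes "weakly_rigid x" "\<And>j. j < n \<Longrightarrow> 0 < lam j \<and> norm (y j) \<le> 1"
    "(\<Sum>j<n. lam j) = 1" "x = (\<Sum>j<n. lam j *\<^sub>R y j)" "i < n"
  shows "blinfun_apply f (y i) = blinfun_apply f x"
  using assms unfolding weakly_rigid_def by blast

lemma weakly_rigid_if_extreme_point:
  assumes "(x::'a::banach) extreme_point_of cball 0 1"
  shows "weakly_rigid x"
  unfolding weakly_rigid_def
proof (intro allI impI, elim conjE)
  fix n lam i f and y :: "nat \<Rightarrow> 'a"
  assume y: "\<forall>j<n. 0 < lam j \<and> norm (y j) \<le> 1"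
    and "(\<Sum>j<n. lam j) = 1" "x = (\<Sum>j<n. lam j *\<^sub>R y j)" "i < n"
  have "y i = x"
    by (rule extreme_point_convex_sum[OF convex_cball assms, where n = n and lam = lam and y = y])
      (use y \<open>(\<Sum>j<n. lam j) = 1\<close> \<open>x = _\<close> \<open>i < n\<close> in auto)
  then show "blinfun_apply f (y i) = blinfun_apply f x" by simp
qed

lemma weakly_rigid_if_preserved_extreme_point:
  assumes "preserved_extreme_point (x::'a::banach)"
  shows "weakly_rigid x"
  unfolding weakly_rigid_def
proof (intro allI impI, elim conjE)
  fix n lam i f and y :: "nat \<Rightarrow> 'a"
  assume y: "\<forall>j<n. 0 < lam j \<and> norm (y j) \<le> 1" and "(\<Sum>j<n. lam j) = 1"
    and "x = (\<Sum>j<n. lam j *\<^sub>R y j)" and "i < n"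
  have "canon_embed x extreme_point_of cball 0 1"
    using assms unfolding preserved_extreme_point_def by simp
  moreover have "0 < lam j \<and> canon_embed (y j) \<in> cball 0 1" if "j < n" for j
    using y that norm_canon_embed_le[of "y j"] by auto
  moreover note \<open>(\<Sum>j<n. lam j) = 1\<close>
  moreover have "canon_embed x = (\<Sum>j<n. lam j *\<^sub>R canon_embed (y j))"
    using \<open>x = _\<close> by (simp add: canon_embed_sum)
  ultimately have "canon_embed (y i) = canon_embed x"
    using \<open>i < n\<close> by (rule extreme_point_convex_sum[OF convex_cball])
  then have "blinfun_apply (canon_embed (y i)) f = blinfun_apply (canon_embed x) f" by simp
  then show "blinfun_apply f (y i) = blinfun_apply f x" by simp
qed

lemma ccs_subset_cball:
  assumes "is_ccs C"
  shows "C \<subseteq> cball 0 1"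
proof
  fix w assume "w \<in> C"
  with assms obtain n :: nat and lam S u where S: "\<forall>i<n. 0 < lam i \<and> is_slice (S i)"
    and lam: "(\<Sum>i<n. lam i) = 1" and u: "\<forall>i<n. u i \<in> S i" and w: "w = (\<Sum>i<n. lam i *\<^sub>R u i)"
    unfolding is_ccs_def by blast
  have "u i \<in> cball 0 1" if "i < n" for i
    using S u that slice_subset_cball unfolding is_slice_def by blast
  then have "(\<Sum>i\<in>{..<n}. lam i *\<^sub>R u i) \<in> cball 0 1"
    using S lam by (intro convex_sum) (auto simp: less_imp_le)
  then show "w \<in> cball 0 1" using w by simp
qed

lemma ccs_contains_rel_weakly_open_nbhd:
  fixes x :: "'a::banach"
  assumes rigid: "weakly_rigid x" and "norm x = 1" "is_ccs C" "x \<in> C"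
  obtains V where "rel_weakly_open_in_ball V" "x \<in> V" "V \<subseteq> C"
proof -
  obtain n :: nat and lam S where "n \<ge> 1" and S: "\<forall>i<n. 0 < lam i \<and> is_slice (S i)"
    and lam: "(\<Sum>i<n. lam i) = 1" and C: "C = {(\<Sum>i<n. lam i *\<^sub>R y i) | y. \<forall>i<n. y i \<in> S i}"
    using \<open>is_ccs C\<close> unfolding is_ccs_def by blast
  obtain f \<delta> where S_slice: "\<And>i. i < n \<Longrightarrow> S i = slice_of (f i) (\<delta> i)"
    using S unfolding is_slice_def by metis
  obtain y where y: "\<forall>i<n. y i \<in> S i" and x: "x = (\<Sum>i<n. lam i *\<^sub>R y i)"
    using \<open>x \<in> C\<close> C by blast
  have "x \<in> S i" if "i < n" for i
  proof -
    have "y i \<in> slice_of (f i) (\<delta> i)" using y S_slice that by auto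
    moreover have "blinfun_apply (f i) (y i) = blinfun_apply (f i) x"
      using S y S_slice by (intro weakly_rigidD[OF rigid _ lam x that]) (auto simp: slice_of_def)
    ultimately show ?thesis using S_slice that \<open>norm x = 1\<close> by (simp add: slice_of_def)
  qed
  show ?thesis
  proof (rule that[of "\<Inter>i<n. S i"])
    show "rel_weakly_open_in_ball (\<Inter>i<n. S i)"
      unfolding rel_weakly_open_in_ball_def
    proof (rule openin_INT2)
      show "{..<n} \<noteq> {}" using \<open>n \<ge> 1\<close> by (simp add: lessThan_empty_iff)
      show "openin (subtopology weak_topology (cball 0 1)) (S i)" if "i \<in> {..<n}" for i
        using S_slice that rel_weakly_open_slice unfolding rel_weakly_open_in_ball_def by simp
    qed (rule finite_lessThan)
    show "x \<in> (\<Inter>i<n. S i)" using \<open>\<And>i. i < n \<Longrightarrow> x \<in> S i\<close> by simp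
    show "(\<Inter>i<n. S i) \<subseteq> C"
    proof
      fix z assume "z \<in> (\<Inter>i<n. S i)"
      moreover have "z = (\<Sum>i<n. lam i *\<^sub>R z)" using lam by (simp flip: scaleR_sum_left)
      ultimately show "z \<in> C"
        unfolding C by (intro CollectI exI[of _ "\<lambda>_. z"] conjI) auto
    qed
  qed
qed

lemma ccs_delta_point_if_super_delta_point:
  fixes x :: "'a::banach"
  assumes super: "super_delta_point x" and rigid: "weakly_rigid x"
  shows "ccs_delta_point x"
  unfolding ccs_delta_point_def
proof (intro conjI allI impI; (elim conjE)?)
  show "norm x = 1" using super by (simp add: super_delta_point_def)
  fix C assume "is_ccs C" "x \<in> C"
  then obtain V where "rel_weakly_open_in_ball V" "x \<in> V" "V \<subseteq> C"
    using ccs_contains_rel_weakly_open_nbhd[OF rigid \<open>norm x = 1\<close>] by metis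
  then have "(SUP y\<in>V. norm (x - y)) = 2" using super unfolding super_delta_point_def by blast
  then show "(SUP y\<in>C. norm (x - y)) = 2"
    using SUP_dist_eq_2_superset[OF \<open>V \<subseteq> C\<close> ccs_subset_cball] \<open>is_ccs C\<close> \<open>x \<in> V\<close> \<open>norm x = 1\<close>
    by blast
qed

(* The hypothesis norm x = 1 is already part of the definitions of the three kinds of \<Delta>-points. *)
theorem mainTheorem3:
  fixes x :: "'a::banach"
  assumes "norm x = 1"
  shows "(preserved_extreme_point x \<and> delta_point x \<longrightarrow> super_delta_point x)
       \<and> (x extreme_point_of cball 0 1 \<and> super_delta_point x \<longrightarrow> ccs_delta_point x)
       \<and> (preserved_extreme_point x \<and> delta_point x \<longrightarrow> super_delta_point x \<and> ccs_delta_point x)"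
proof -
  have super: "preserved_extreme_point x \<Longrightarrow> delta_point x \<Longrightarrow> super_delta_point x"
    by (rule super_delta_point_if_preserved_extreme_delta_point)
  have "x extreme_point_of cball 0 1 \<Longrightarrow> super_delta_point x \<Longrightarrow> ccs_delta_point x"
    by (intro ccs_delta_point_if_super_delta_point weakly_rigid_if_extreme_point)
  moreover have "preserved_extreme_point x \<Longrightarrow> super_delta_point x \<Longrightarrow> ccs_delta_point x"
    by (intro ccs_delta_point_if_super_delta_point weakly_rigid_if_preserved_extreme_point)
  ultimately show ?thesis using super by blast
qed

end
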